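(* Let $V\le\mathbb{F}_2^n$ be a linear subspace of dimension $r$, $d=n-r$, $\mathbf{s}_0\in\mathbb{F}_2^n$, and let $\rho$ be an $n$-qubit state whose syndrome distribution is $p_\rho=p_{\mathbf{s}_0,V}$, where $p_{\mathbf{s}_0,V}(\mathbf{s})=2^{-r}\mathbf{1}[\mathbf{s}\in\mathbf{s}_0+V]$. Consider the adaptive certification procedure with threshold $\varepsilon=0$: gauges $A_1,A_2,\dots\in\mathrm{GL}(n,2)$ are queried, $A_k$ with columns $\mathbf{a}_{k,1},\dots,\mathbf{a}_{k,n}$; after round $k$ one forms $Q_k=\{\mathbf{a}_{j,i}:j\le k,\ i\le n\}$, $\mathcal{F}_k=\{p\in\Delta(\mathbb{F}_2^n):\widehat p(\mathbf{u})=\mu_\rho(\mathbf{u})\ \forall\mathbf{u}\in Q_k\}$, $L_k=\min_{p\in\mathcal{F}_k}p(\mathbf{0})$, $U_k=\max_{p\in\mathcal{F}_k}p(\mathbf{0})$, and the procedure stops at the first $k$ with $U_k-L_k\le\varepsilon$, returning $[L_k,U_k]$. Suppose that by some round $t$ the queried label set $Q_t$ contains a basis of $V^\perp=\{\mathbf{u}:\mathbf{u}\cdot\mathbf{v}=0\ \forall\mathbf{v}\in V\}$ and, in the case $\mathbf{s}_0\in V$, also contains one representative of every nonzero coset of $\mathbb{F}_2^n/V^\perp$. Then the procedure terminates by round $t$ and returns the exact value $$F(\rho,\psi)=p_\rho(\mathbf{0})=\begin{cases}2^{-r},&\mathbf{s}_0\in V,\\ 0,&\mathbf{s}_0\notin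 V.\end{cases}$$ Thus the number of such structurally relevant stabilizer labels is $d$ if $\mathbf{s}_0\notin V$, and at most $d+2^r-1$ if $\mathbf{s}_0\in V$.
   Context: Setting: $|\psi\rangle$ is an $n$-qubit stabilizer state whose stabilizer group is generated by independent commuting Pauli operators $g_1,\dots,g_n$; $g(\mathbf{u})=\prod_j g_j^{u_j}$ for $\mathbf{u}\in\mathbb{F}_2^n$. Syndrome projectors $\Pi_{\mathbf{s}}=2^{-n}\prod_j(I+(-1)^{s_j}g_j)$ are orthogonal rank-one projectors summing to identity with $\Pi_{\mathbf{0}}=|\psi\rangle\langle\psi|$. The syndrome distribution is $p_\rho(\mathbf{s})=\mathrm{tr}(\rho\Pi_{\mathbf{s}})$, so $F(\rho,\psi)=\langle\psi|\rho|\psi\rangle=p_\rho(\mathbf{0})$; $\mu_\rho(\mathbf{u})=\mathrm{tr}(\rho g(\mathbf{u}))=\widehat{p_\rho}(\mathbf{u})$ with Walsh transform $\widehat p(\mathbf{u})=\sum_{\mathbf{s}}(-1)^{\mathbf{u}\cdot\mathbf{s}}p(\mathbf{s})$ and $\mathbf{u}\cdot\mathbf{s}$ the mod-2 inner product. $\Delta(\mathbb{F}_2^n)$ is the set of probability distributions on $\mathbb{F}_2^n$; $\mathrm{GL}(n,2)$ the invertible binary $n\times n$ matrices. The claim does not depend on how the gauges are chosen. *)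

theory Defs
  imports "HOL-Analysis.Analysis" "HOL-Library.Z2"
begin

text \<open>Vectors in F_2^n are modelled as bit ^ 'n with n = CARD('n); the mod-2 inner
  product is scalar_product; linear algebra over F_2 is the library's vec interpretation.\<close>

definition sign_bit :: "bit \<Rightarrow> real" where
  "sign_bit b = (if b = 0 then 1 else -1)"

definition walsh :: "(bit ^ 'n \<Rightarrow> real) \<Rightarrow> bit ^ 'n \<Rightarrow> real" where
  "walsh p u = (\<Sum>s\<in>UNIV. sign_bit (scalar_product u s) * p s)"

definition prob_dists :: "(bit ^ 'n \<Rightarrow> real) set" where
  "prob_dists = {p. (\<forall>s. 0 \<le> p s) \<and> (\<Sum>s\<in>UNIV. p s) = 1}"

definition orth :: "(bit ^ 'n) set \<Rightarrow> (bit ^ 'n) set" where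
  "orth V = {u. \<forall>v\<in>V. scalar_product u v = 0}"

definition queried :: "(nat \<Rightarrow> bit ^ 'n ^ 'n) \<Rightarrow> nat \<Rightarrow> (bit ^ 'n) set" where
  "queried A k = {column i (A j) | j i. 1 \<le> j \<and> j \<le> k}"

definition feasible :: "(bit ^ 'n \<Rightarrow> real) \<Rightarrow> (nat \<Rightarrow> bit ^ 'n ^ 'n) \<Rightarrow> nat \<Rightarrow> (bit ^ 'n \<Rightarrow> real) set" where
  "feasible mu A k = {p \<in> prob_dists. \<forall>u\<in>queried A k. walsh p u = mu u}"

definition lower_bd :: "(bit ^ 'n \<Rightarrow> real) \<Rightarrow> (nat \<Rightarrow> bit ^ 'n ^ 'n) \<Rightarrow> nat \<Rightarrow> real" where
  "lower_bd mu A k = Inf ((\<lambda>p. p 0) ` feasible mu A k)"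

definition upper_bd :: "(bit ^ 'n \<Rightarrow> real) \<Rightarrow> (nat \<Rightarrow> bit ^ 'n ^ 'n) \<Rightarrow> nat \<Rightarrow> real" where
  "upper_bd mu A k = Sup ((\<lambda>p. p 0) ` feasible mu A k)"

definition stops_at :: "real \<Rightarrow> (bit ^ 'n \<Rightarrow> real) \<Rightarrow> (nat \<Rightarrow> bit ^ 'n ^ 'n) \<Rightarrow> nat \<Rightarrow> bool" where
  "stops_at eps mu A k \<longleftrightarrow> 1 \<le> k \<and> upper_bd mu A k - lower_bd mu A k \<le> eps \<and>
     (\<forall>j. 1 \<le> j \<and> j < k \<longrightarrow> \<not> (upper_bd mu A j - lower_bd mu A j \<le> eps))"

definition relevant_labels :: "(bit ^ 'n) set \<Rightarrow> bit ^ 'n \<Rightarrow> (bit ^ 'n) set \<Rightarrow> bool" where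
  "relevant_labels V s0 S \<longleftrightarrow>
     (\<exists>B\<subseteq>S. vec.independent B \<and> vec.span B = orth V) \<and>
     (s0 \<in> V \<longrightarrow> (\<forall>x. x \<notin> orth V \<longrightarrow> (\<exists>q\<in>S. q \<in> (\<lambda>w. x + w) ` orth V)))"

end

theory Submission
  imports Defs
begin

text \<open>
  Every feasible p matches p_rho on a basis of orth V, where the Walsh coefficients of p_rho are
  the signs (-1)^(u.s0). A Walsh coefficient of modulus 1 confines the support of a probability
  distribution to an affine hyperplane, so p is supported on s0 + V. If s0 \<notin> V this forces
  p 0 = 0. If s0 \<in> V, p lives on V, so its Walsh transform is constant on the cosets of orth V;
  the queried coset representatives show that it vanishes off orth V, exactly like that of p_rho,
  and Walsh inversion at 0 gives p 0 = p_rho 0. Hence L_t = U_t and the procedure stops by round t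
  with the exact value. The label counts come from a basis of orth V, of dimension n - r because
  |V| |orth V| = 2^n, together with the nonzero vectors of a complement of orth V.
\<close>

lemma (in vector_space) card_span_independent:
  assumes "finite (UNIV :: 'a set)" and B: "independent B" "finite B"
  shows "card (span B) = CARD('a) ^ card B"
proof -
  define comb where "comb c = (\<Sum>v\<in>B. c v *s v)" for c :: "'b \<Rightarrow> 'a"
  have "span B = comb ` (B \<rightarrow>\<^sub>E UNIV)"
  proof -
    have "comb c = comb (restrict c B)" for c
      unfolding comb_def by (rule sum.cong) auto
    then show ?thesis
      unfolding span_finite[OF B(2)] comb_def[symmetric] by force
  qed
  moreover have "inj_on comb (B \<rightarrow>\<^sub>E UNIV)"
  proof (rule inj_onI)
    fix c c' assume c: "c \<in> B \<rightarrow>\<^sub>E UNIV" "c' \<in> B \<rightarrow>\<^sub>E UNIV" and "comb c = comb c'"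
    then have "(\<Sum>v\<in>B. (c v - c' v) *s v) = 0"
      unfolding comb_def by (simp add: scale_left_diff_distrib sum_subtractf)
    then have "\<forall>v\<in>B. c v - c' v = 0"
      using B(1) dependent_finite[OF B(2), THEN iffD2, OF exI[of _ "\<lambda>v. c v - c' v"]] by blast
    then show "c = c'" using c by (auto intro: PiE_ext)
  qed
  ultimately show ?thesis
    by (simp add: card_image card_PiE B(2))
qed

instance bit :: finite
proof
  have "(UNIV :: bit set) = {0, 1}" by (auto intro: bit.exhaust)
  then show "finite (UNIV :: bit set)" by (metis finite.emptyI finite.insertI)
qed

lemma card_bit: "CARD(bit) = 2"
proof -
  have "(UNIV :: bit set) = {0, 1}" by (auto intro: bit.exhaust)
  then show ?thesis by (metis card_2_iff zero_neq_one)
qed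

lemma card_span_independent_bit:
  fixes B :: "(bit ^ 'n) set"
  assumes "vec.independent B"
  shows "card (vec.span B) = 2 ^ card B"
  using vec.card_span_independent[OF _ assms] by (simp add: card_bit)

lemma card_subspace_bit:
  fixes V :: "(bit ^ 'n) set"
  assumes "vec.subspace V"
  shows "card V = 2 ^ vec.dim V"
proof -
  obtain B where B: "B \<subseteq> V" "vec.independent B" "V \<subseteq> vec.span B" "card B = vec.dim V"
    by (rule vec.basis_exists)
  then have "vec.span B = V" using assms by (intro vec.span_subspace) auto
  then show ?thesis using card_span_independent_bit[OF B(2)] B(4) by simp
qed

lemma scalar_product_add_left:
  "scalar_product (u + v) w = scalar_product u w + scalar_product v (w :: 'a::semiring_1 ^ 'n)"
  unfolding scalar_product_def by (simp add: distrib_right sum.distrib)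

lemma scalar_product_add_right:
  "scalar_product u (v + w) = scalar_product u v + scalar_product u (w :: 'a::semiring_1 ^ 'n)"
  unfolding scalar_product_def by (simp add: distrib_left sum.distrib)

lemma scalar_product_diff_right:
  "scalar_product u (v - w) = scalar_product u v - scalar_product u (w :: 'a::ring_1 ^ 'n)"
  unfolding scalar_product_def by (simp add: right_diff_distrib sum_subtractf)

lemma scalar_product_smult_left:
  "scalar_product (c *s u) v = c * scalar_product u (v :: 'a::semiring_1 ^ 'n)"
  unfolding scalar_product_def by (simp add: sum_distrib_left mult.assoc)

lemma scalar_product_commute:
  "scalar_product u v = scalar_product v (u :: 'a::comm_semiring_1 ^ 'n)"
  unfolding scalar_product_def by (simp add: mult.commute)

lemma scalar_product_zero_left [simp]: "scalar_product (0 :: 'a::semiring_1 ^ 'n) v = 0"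
  by (simp add: scalar_product_def)

lemma scalar_product_axis_right: "scalar_product u (axis i 1) = u $ i"
  for u :: "'a::semiring_1 ^ 'n"
  unfolding scalar_product_def axis_def by (simp add: if_distrib cong: if_cong)

lemma sign_bit_simps [simp]: "sign_bit 0 = 1" "sign_bit 1 = -1"
  by (simp_all add: sign_bit_def)

lemma sign_bit_add: "sign_bit (a + b) = sign_bit a * sign_bit b"
  by (cases a; cases b) simp_all

lemma sign_bit_eq_iff: "sign_bit a = sign_bit b \<longleftrightarrow> a = b"
  by (cases a; cases b) simp_all

lemma subspace_orth: "vec.subspace (orth V)"
  unfolding vec.subspace_def orth_def
  by (auto simp: scalar_product_add_left scalar_product_smult_left)

lemma orth_UNIV: "orth (UNIV :: (bit ^ 'n) set) = {0}"
proof -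
  have "u = 0" if "u \<in> orth UNIV" for u :: "bit ^ 'n"
    using that by (auto simp: orth_def vec_eq_iff scalar_product_axis_right[symmetric])
  then show ?thesis by (auto simp: orth_def)
qed

lemma sum_sign_bit_subspace:
  assumes V: "vec.subspace V"
  shows "(\<Sum>v\<in>V. sign_bit (scalar_product u v)) = (if u \<in> orth V then real (card V) else 0)"
proof (cases "u \<in> orth V")
  case True
  then show ?thesis by (simp add: orth_def)
next
  case False
  then obtain v0 where v0: "v0 \<in> V" "scalar_product u v0 = 1"
    by (auto simp: orth_def)
  let ?g = "\<lambda>v. sign_bit (scalar_product u v)"
  \<comment> \<open>translation by v0 permutes V and flips every sign\<close>
  have "(\<Sum>v\<in>V. ?g v) = (\<Sum>v\<in>V. ?g (v + v0))"
    by (rule sum.reindex_bij_witness[of _ "\<lambda>v. v + v0" "\<lambda>v. v - v0"])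
      (use v0 V in \<open>auto intro: vec.subspace_add vec.subspace_diff\<close>)
  also have "\<dots> = - (\<Sum>v\<in>V. ?g v)"
    by (simp only: scalar_product_add_right sign_bit_add v0 sign_bit_simps mult_minus1_right sum_negf)
  finally show ?thesis using False by simp
qed

lemma sum_sign_bit_UNIV:
  "(\<Sum>u\<in>UNIV. sign_bit (scalar_product u s)) = (if s = 0 then 2 ^ CARD('n) else 0)"
  for s :: "bit ^ 'n"
  using sum_sign_bit_subspace[OF vec.subspace_UNIV, of s]
  by (simp add: scalar_product_commute[of _ s] orth_UNIV CARD_vec card_bit)

lemma card_mult_card_orth:
  fixes V :: "(bit ^ 'n) set"
  assumes V: "vec.subspace V"
  shows "card V * card (orth V) = 2 ^ CARD('n)"
proof -
  have "real (card V * card (orth V)) = (\<Sum>u\<in>UNIV. \<Sum>v\<in>V. sign_bit (scalar_product u v))"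
    by (simp add: sum_sign_bit_subspace[OF V] sum.If_cases)
  also have "\<dots> = (\<Sum>v\<in>V. \<Sum>u\<in>UNIV. sign_bit (scalar_product u v))"
    by (rule sum.swap)
  also have "\<dots> = real (2 ^ CARD('n))"
    using vec.subspace_0[OF V] by (simp add: sum_sign_bit_UNIV sum.delta)
  finally show ?thesis by (simp only: of_nat_eq_iff)
qed

lemma orth_orth:
  fixes V :: "(bit ^ 'n) set"
  assumes V: "vec.subspace V"
  shows "orth (orth V) = V"
proof -
  have "V \<subseteq> orth (orth V)"
    by (auto simp: orth_def scalar_product_commute)
  moreover have "card (orth (orth V)) = card V"
    using card_mult_card_orth[OF V] card_mult_card_orth[OF subspace_orth, of V]
      vec.subspace_0[OF subspace_orth, of V]
    by (metis card_0_eq empty_iff finite mult.commute mult_right_cancel)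
  ultimately show ?thesis by (intro card_subset_eq[symmetric]) auto
qed

lemma dim_orth:
  fixes V :: "(bit ^ 'n) set"
  assumes V: "vec.subspace V"
  shows "vec.dim (orth V) = CARD('n) - vec.dim V"
proof -
  have "(2::nat) ^ (vec.dim V + vec.dim (orth V)) = 2 ^ CARD('n)"
    using card_mult_card_orth[OF V]
    by (simp add: power_add card_subspace_bit[OF V] card_subspace_bit[OF subspace_orth])
  then show ?thesis by (simp add: power_inject_exp)
qed

lemma prob_dists_range:
  assumes "p \<in> prob_dists"
  shows "p s \<in> {0..1}"
proof -
  have "p s \<le> (\<Sum>s\<in>UNIV. p s)"
    using assms by (intro member_le_sum) (auto simp: prob_dists_def)
  then show ?thesis using assms by (simp add: prob_dists_def)
qed

lemma walsh_zero: "p \<in> prob_dists \<Longrightarrow> walsh p 0 = 1"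
  by (simp add: walsh_def prob_dists_def)

lemma sum_walsh: "(\<Sum>u\<in>UNIV. walsh p u) = 2 ^ CARD('n) * p (0 :: bit ^ 'n)"
proof -
  have "(\<Sum>u\<in>UNIV. walsh p u) = (\<Sum>s\<in>UNIV. (\<Sum>u\<in>UNIV. sign_bit (scalar_product u s)) * p s)"
    unfolding walsh_def by (subst sum.swap) (simp add: sum_distrib_right)
  also have "\<dots> = (\<Sum>s\<in>UNIV. if s = 0 then 2 ^ CARD('n) * p s else 0)"
    by (rule sum.cong) (simp_all add: sum_sign_bit_UNIV)
  also have "\<dots> = 2 ^ CARD('n) * p 0"
    by simp
  finally show ?thesis .
qed

lemma walsh_eq_sign_bit_imp_scalar_product:
  assumes p: "p \<in> prob_dists" and w: "walsh p b = sign_bit a" and ps: "p s \<noteq> 0"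
  shows "scalar_product b s = a"
proof -
  \<comment> \<open>the expectation of the nonnegative variable 1 - sign_bit a * sign_bit (b.s) vanishes\<close>
  let ?f = "\<lambda>s'. (1 - sign_bit a * sign_bit (scalar_product b s')) * p s'"
  have nonneg: "0 \<le> ?f s'" for s'
    using p by (intro mult_nonneg_nonneg) (auto simp: prob_dists_def sign_bit_def)
  have "(\<Sum>s'\<in>UNIV. ?f s') = (\<Sum>s'\<in>UNIV. p s') - sign_bit a * walsh p b"
    unfolding walsh_def by (simp add: algebra_simps sum_subtractf sum_distrib_left)
  also have "\<dots> = 0"
    using p w by (cases a) (simp_all add: prob_dists_def)
  finally have "?f s = 0"
    using nonneg by (simp add: sum_nonneg_eq_0_iff)
  then have "sign_bit (scalar_product b s) = sign_bit a"
    using ps by (cases a; cases "scalar_product b s") simp_all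
  then show ?thesis by (simp add: sign_bit_eq_iff)
qed

lemma support_in_coset:
  fixes V B :: "(bit ^ 'n) set"
  assumes V: "vec.subspace V" and p: "p \<in> prob_dists" and B: "vec.span B = orth V"
    and w: "\<forall>b\<in>B. walsh p b = sign_bit (scalar_product b s0)" and ps: "p s \<noteq> 0"
  shows "s - s0 \<in> V"
proof -
  let ?H = "{u. scalar_product u (s - s0) = 0}"
  have "B \<subseteq> ?H"
    using walsh_eq_sign_bit_imp_scalar_product[OF p _ ps] w
    by (auto simp: scalar_product_diff_right)
  moreover have "vec.subspace ?H"
    unfolding vec.subspace_def by (auto simp: scalar_product_add_left scalar_product_smult_left)
  ultimately have "orth V \<subseteq> ?H"
    unfolding B[symmetric] by (rule vec.span_minimal)
  then have "s - s0 \<in> orth (orth V)"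
    by (auto simp: orth_def scalar_product_commute)
  then show ?thesis by (simp add: orth_orth[OF V])
qed

lemma walsh_add_orth:
  assumes supp: "\<forall>s. p s \<noteq> 0 \<longrightarrow> s \<in> V" and w: "w \<in> orth V"
  shows "walsh p (u + w) = walsh p u"
  unfolding walsh_def
proof (rule sum.cong)
  fix s
  show "sign_bit (scalar_product (u + w) s) * p s = sign_bit (scalar_product u s) * p s"
    using supp w by (cases "p s = 0") (auto simp: orth_def scalar_product_add_left)
qed simp

definition coset_dist :: "bit ^ 'n \<Rightarrow> (bit ^ 'n) set \<Rightarrow> bit ^ 'n \<Rightarrow> real" where
  "coset_dist s0 V s = (if s \<in> (\<lambda>v. s0 + v) ` V then 1 / card V else 0)"

lemma coset_dist_prob:
  assumes "vec.subspace V"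
  shows "coset_dist s0 V \<in> prob_dists"
proof -
  have "card ((\<lambda>v. s0 + v) ` V) = card V"
    by (simp add: card_image)
  moreover have "card V \<noteq> 0"
    using vec.subspace_0[OF assms] by (auto simp: card_eq_0_iff)
  ultimately show ?thesis
    by (simp add: prob_dists_def coset_dist_def sum.If_cases)
qed

lemma coset_dist_zero:
  assumes "vec.subspace V"
  shows "coset_dist s0 V 0 = (if s0 \<in> V then 1 / card V else 0)"
proof -
  have "0 \<in> (\<lambda>v. s0 + v) ` V \<longleftrightarrow> - s0 \<in> V"
    by (force simp: image_iff add_eq_0_iff eq_commute[of 0])
  also have "\<dots> \<longleftrightarrow> s0 \<in> V"
    using vec.subspace_neg[OF assms] by force
  finally show ?thesis by (simp add: coset_dist_def)
qed

lemma walsh_coset_dist: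
  assumes V: "vec.subspace V"
  shows "walsh (coset_dist s0 V) u = (if u \<in> orth V then sign_bit (scalar_product u s0) else 0)"
proof -
  have "walsh (coset_dist s0 V) u = (\<Sum>s\<in>(\<lambda>v. s0 + v) ` V. sign_bit (scalar_product u s) / card V)"
    unfolding walsh_def coset_dist_def by (simp add: if_distrib sum.If_cases Int_absorb1 cong: if_cong)
  also have "\<dots> = (\<Sum>v\<in>V. sign_bit (scalar_product u (s0 + v)) / card V)"
    by (simp add: sum.reindex)
  also have "\<dots> = sign_bit (scalar_product u s0) / card V * (\<Sum>v\<in>V. sign_bit (scalar_product u v))"
    by (simp only: scalar_product_add_right sign_bit_add) (simp add: sum_distrib_left)
  also have "\<dots> = (if u \<in> orth V then sign_bit (scalar_product u s0) else 0)"
    using vec.subspace_0[OF V] by (auto simp: sum_sign_bit_subspace[OF V] card_eq_0_iff)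
  finally show ?thesis .
qed

lemma walsh_eq_coset_dist_if_support_in_subspace:
  assumes V: "vec.subspace V" and S: "relevant_labels V s0 S" and "s0 \<in> V"
    and p: "p \<in> prob_dists" and supp: "\<forall>s. p s \<noteq> 0 \<longrightarrow> s \<in> V"
    and agree: "\<forall>u\<in>S. walsh p u = walsh (coset_dist s0 V) u"
  shows "walsh p u = walsh (coset_dist s0 V) u"
proof (cases "u \<in> orth V")
  case True
  then show ?thesis
    using walsh_add_orth[OF supp True, of 0] walsh_zero[OF p] \<open>s0 \<in> V\<close>
    by (simp add: walsh_coset_dist[OF V] orth_def)
next
  case False
  \<comment> \<open>the representative in S of the coset u + orth V lies outside orth V, so its label reads 0\<close>
  then obtain w where w: "w \<in> orth V" "u + w \<in> S"
    using S \<open>s0 \<in> V\<close> unfolding relevant_labels_def by blast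
  have "u + w \<notin> orth V"
    using False vec.subspace_diff[OF subspace_orth _ w(1), of "u + w"] by auto
  then have "walsh p (u + w) = 0"
    using agree w(2) by (simp add: walsh_coset_dist[OF V])
  then show ?thesis
    using walsh_add_orth[OF supp w(1), of u] False by (simp add: walsh_coset_dist[OF V])
qed

lemma relevant_labels_determine_value_at_zero:
  fixes p :: "bit ^ 'n \<Rightarrow> real"
  assumes V: "vec.subspace V" and S: "relevant_labels V s0 S" and p: "p \<in> prob_dists"
    and agree: "\<forall>u\<in>S. walsh p u = walsh (coset_dist s0 V) u"
  shows "p 0 = coset_dist s0 V 0"
proof -
  obtain B where B: "B \<subseteq> S" "vec.span B = orth V"
    using S unfolding relevant_labels_def by blast
  have "\<forall>b\<in>B. walsh p b = sign_bit (scalar_product b s0)"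
    using B agree vec.span_base[of _ B] by (auto simp: walsh_coset_dist[OF V])
  then have supp: "s - s0 \<in> V" if "p s \<noteq> 0" for s
    using support_in_coset[OF V p B(2)] that by blast
  show ?thesis
  proof (cases "s0 \<in> V")
    case False
    have "p 0 = 0"
      using supp[of 0] vec.subspace_neg[OF V, of "- s0"] False by force
    then show ?thesis using False by (simp add: coset_dist_zero[OF V])
  next
    case True
    have "\<forall>s. p s \<noteq> 0 \<longrightarrow> s \<in> V"
      using vec.subspace_add[OF V supp True] by simp
    then have "walsh p = walsh (coset_dist s0 V)"
      using walsh_eq_coset_dist_if_support_in_subspace[OF V S True p _ agree] by blast
    then show ?thesis
      using sum_walsh[of p] sum_walsh[of "coset_dist s0 V"] by simp
  qed
qed

lemma feasible_self: "p \<in> prob_dists \<Longrightarrow> p \<in> feasible (walsh p) A k"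
  by (simp add: feasible_def)

lemma feasible_bounds:
  assumes q: "q \<in> feasible mu A k"
  shows "lower_bd mu A k \<le> q 0" and "q 0 \<le> upper_bd mu A k"
proof -
  have "(\<lambda>p. p 0) ` feasible mu A k \<subseteq> {0..1}"
    unfolding feasible_def using prob_dists_range[where s = 0] by blast
  then have "bdd_below ((\<lambda>p. p 0) ` feasible mu A k)" and "bdd_above ((\<lambda>p. p 0) ` feasible mu A k)"
    by (meson bdd_below_Icc bdd_below_mono, meson bdd_above_Icc bdd_above_mono)
  then show "lower_bd mu A k \<le> q 0" and "q 0 \<le> upper_bd mu A k"
    unfolding lower_bd_def upper_bd_def using q by (simp_all add: cInf_lower cSup_upper)
qed

lemma bounds_eq_if_unique_value:
  assumes "q \<in> feasible mu A k" and "\<forall>p\<in>feasible mu A k. p 0 = q 0"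
  shows "lower_bd mu A k = q 0" and "upper_bd mu A k = q 0"
proof -
  have "(\<lambda>p. p 0) ` feasible mu A k = {q 0}"
    using assms by blast
  then show "lower_bd mu A k = q 0" and "upper_bd mu A k = q 0"
    by (simp_all add: lower_bd_def upper_bd_def)
qed

lemma stops_at_first_tight_round:
  assumes "1 \<le> t" and "upper_bd mu A t - lower_bd mu A t \<le> eps"
  obtains k where "k \<le> t" and "stops_at eps mu A k"
proof -
  define tight where "tight j \<longleftrightarrow> 1 \<le> j \<and> upper_bd mu A j - lower_bd mu A j \<le> eps" for j
  define k where "k = (LEAST j. tight j)"
  have "tight t" using assms by (simp add: tight_def)
  then have "tight k" and "k \<le> t"
    unfolding k_def by (rule LeastI, rule Least_le)
  moreover have "\<not> tight j" if "j < k" for j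
    using that unfolding k_def by (rule not_less_Least)
  ultimately show ?thesis
    using that by (auto simp: stops_at_def tight_def)
qed

lemma stops_at_exact:
  assumes "stops_at 0 mu A k" and "q \<in> feasible mu A k"
  shows "lower_bd mu A k = q 0" and "upper_bd mu A k = q 0"
  using assms feasible_bounds[OF assms(2)] by (auto simp: stops_at_def)

lemma exists_basis_orth:
  fixes V :: "(bit ^ 'n) set"
  assumes V: "vec.subspace V"
  obtains B where "vec.independent B" "vec.span B = orth V" "card B = CARD('n) - vec.dim V"
proof -
  obtain B where "B \<subseteq> orth V" "vec.independent B" "orth V \<subseteq> vec.span B" "card B = vec.dim (orth V)"
    by (rule vec.basis_exists)
  then show ?thesis
    using that vec.span_subspace[OF _ _ subspace_orth] dim_orth[OF V] by metis
qed

lemma relevant_labels_basis: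
  fixes V :: "(bit ^ 'n) set"
  assumes "vec.subspace V" and "s0 \<notin> V"
  shows "\<exists>S. relevant_labels V s0 S \<and> card S = CARD('n) - vec.dim V"
proof -
  obtain B where B: "vec.independent B" "vec.span B = orth V" "card B = CARD('n) - vec.dim V"
    using exists_basis_orth[OF assms(1)] .
  then have "relevant_labels V s0 B"
    using assms(2) by (auto simp: relevant_labels_def)
  then show ?thesis using B(3) by blast
qed

lemma relevant_labels_basis_and_coset_reps:
  fixes V :: "(bit ^ 'n) set"
  assumes V: "vec.subspace V"
  shows "\<exists>S. relevant_labels V s0 S \<and> card S \<le> CARD('n) - vec.dim V + 2 ^ vec.dim V - 1"
proof -
  obtain B where B: "vec.independent B" "vec.span B = orth V" "card B = CARD('n) - vec.dim V"
    using exists_basis_orth[OF V] .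
  define C where "C = vec.extend_basis B"
  have C: "B \<subseteq> C" "vec.independent C" "vec.span C = UNIV"
    using B(1) by (simp_all add: C_def vec.extend_basis_superset vec.independent_extend_basis)
  \<comment> \<open>W complements orth V, so it meets every nonzero coset of orth V\<close>
  define W where "W = vec.span (C - B)"
  have "card C = CARD('n)"
    using vec.basis_card_eq_dim[of C UNIV] C vec_dim_card by auto
  then have "card (C - B) = vec.dim V"
    using C(1) B(3) dim_subset_UNIV_cart_gen[of V] by (simp add: card_Diff_subset)
  moreover have "vec.independent (C - B)"
    using C(2) by (rule vec.independent_mono) auto
  ultimately have card_W: "card W = 2 ^ vec.dim V"
    by (simp add: W_def card_span_independent_bit)
  have reps: "\<exists>q\<in>W - {0}. q \<in> (\<lambda>w. x + w) ` orth V" if x: "x \<notin> orth V" for x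
  proof -
    have "x \<in> vec.span (B \<union> (C - B))"
      using C by (simp add: Un_absorb1)
    then obtain a w where aw: "x = a + w" "a \<in> orth V" "w \<in> W"
      unfolding vec.span_Un B(2) W_def by blast
    then have "w \<noteq> 0" and "w = x + - a" and "- a \<in> orth V"
      using x vec.subspace_neg[OF subspace_orth] by (auto simp: algebra_simps)
    then show ?thesis using aw(3) by blast
  qed
  define S where "S = B \<union> (W - {0})"
  have "relevant_labels V s0 S"
    unfolding relevant_labels_def
  proof (intro conjI impI allI)
    show "\<exists>B'\<subseteq>S. vec.independent B' \<and> vec.span B' = orth V"
      using B by (intro exI[of _ B]) (simp add: S_def)
    show "\<exists>q\<in>S. q \<in> (\<lambda>w. x + w) ` orth V" if "x \<notin> orth V" for x
      using reps[OF that] by (auto simp: S_def)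
  qed
  moreover have "card (W - {0}) = 2 ^ vec.dim V - 1"
    using card_W vec.span_zero[of "C - B"] by (simp add: W_def card_Diff_singleton)
  then have "card S \<le> CARD('n) - vec.dim V + 2 ^ vec.dim V - 1"
    unfolding S_def using card_Un_le[of B "W - {0}"] B(3)
    by (simp add: Nat.add_diff_assoc)
  ultimately show ?thesis by blast
qed

theorem proposition9:
  fixes V :: "(bit ^ 'n) set" and s0 :: "bit ^ 'n" and r d t :: nat
    and p_rho :: "bit ^ 'n \<Rightarrow> real" and A :: "nat \<Rightarrow> bit ^ 'n ^ 'n"
  assumes V: "vec.subspace V" and r: "vec.dim V = r" and d: "d = CARD('n) - r"
    and p_rho: "p_rho = (\<lambda>s. if s \<in> (\<lambda>v. s0 + v) ` V then 1 / 2 ^ r else 0)"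
    and gauges: "\<forall>k\<ge>1. invertible (A k)"
    and t: "1 \<le> t"
    and Qt: "relevant_labels V s0 (queried A t)"
  shows "(\<exists>k\<le>t. stops_at 0 (walsh p_rho) A k \<and>
            lower_bd (walsh p_rho) A k = p_rho 0 \<and> upper_bd (walsh p_rho) A k = p_rho 0)
       \<and> p_rho 0 = (if s0 \<in> V then 1 / 2 ^ r else 0)
       \<and> (s0 \<notin> V \<longrightarrow> (\<exists>S. relevant_labels V s0 S \<and> card S = d))
       \<and> (s0 \<in> V \<longrightarrow> (\<exists>S. relevant_labels V s0 S \<and> card S \<le> d + 2 ^ r - 1))"
proof -
  have card_V: "card V = 2 ^ r"
    using card_subspace_bit[OF V] r by simp
  then have p_rho_coset: "p_rho = coset_dist s0 V"
    by (simp add: p_rho coset_dist_def fun_eq_iff)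
  have prob: "p_rho \<in> prob_dists"
    unfolding p_rho_coset using coset_dist_prob[OF V] .
  have "\<forall>p\<in>feasible (walsh p_rho) A t. p 0 = p_rho 0"
    unfolding p_rho_coset feasible_def
    using relevant_labels_determine_value_at_zero[OF V Qt] by blast
  then have "upper_bd (walsh p_rho) A t - lower_bd (walsh p_rho) A t \<le> 0"
    using bounds_eq_if_unique_value[OF feasible_self[OF prob]] by simp
  then obtain k where "k \<le> t" "stops_at 0 (walsh p_rho) A k"
    using stops_at_first_tight_round[OF t] by blast
  then have "\<exists>k\<le>t. stops_at 0 (walsh p_rho) A k \<and>
            lower_bd (walsh p_rho) A k = p_rho 0 \<and> upper_bd (walsh p_rho) A k = p_rho 0"
    using stops_at_exact[OF _ feasible_self[OF prob]] by blast
  moreover have "p_rho 0 = (if s0 \<in> V then 1 / 2 ^ r else 0)"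
    using coset_dist_zero[OF V] card_V by (simp add: p_rho_coset)
  ultimately show ?thesis
    using relevant_labels_basis[OF V] relevant_labels_basis_and_coset_reps[OF V, of s0]
    unfolding r d by blast
qed

end
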